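(* Let $\theta:\mathbb{A}\to\mathbb{A}^\lambda$ and $\zeta:\mathbb{B}\to\mathbb{B}^\lambda$ be primitive substitutions of the same length $\lambda$, each satisfying the standing assumptions, and let $\Sigma=\theta\vee\zeta:\mathcal{A}\to\mathcal{A}^\lambda$ be a substitution joining of them. Then $\operatorname{lcm}(h(\theta),h(\zeta))\mid h(\Sigma)$ and $$\max(c(\theta),c(\zeta))\le c(\Sigma)\le c(\theta)\cdot c(\zeta).$$
   Context: A substitution $\theta:\mathbb{A}\to\mathbb{A}^\lambda$ ($\lambda\ge2$) is primitive if some iterate $\theta^k(a)$ contains all letters for every $a$. Standing assumptions for a substitution: some letter $a_0$ with $\theta(a_0)_0=a_0$, injective on letters, infinite subshift. Height $h(\theta)=\max\{m\ge1:\gcd(m,\lambda)=1,\ m\mid\gcd\{r\ge1:u[r]=u[0]\}\}$ with $u$ the fixed point starting with $a_0$ (for $\Sigma$, use a fixed point of a suitable power); column number $c(\theta)=\min_{k\ge1,0\le j<\lambda^k}|\{\theta^k(a)_j:a\in\mathbb{A}\}|$. A substitution joining: $\mathcal{A}\subset\mathbb{A}\times\mathbb{B}$ with both coordinate projections surjective and such that $(a,b)\in\mathcal{A}$ implies $(\theta(a)_j,\zeta(b)_j)\in\mathcal{A}$ for all $0\le j<\lambda$; $\Sigma(a,b)_j=(\theta(a)_j,\zeta(b)_j)$, and $\Sigma$ is assumed primitive and to have a letter $e$ with $\Sigma(e)_0=e$. *)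

theory Defs
  imports Main
begin

text \<open>A substitution of constant length l on letters of type 'a is a function
  th :: 'a => nat => 'a, where th a j is the j-th letter (j < l) of th(a).\<close>

fun subst_iter :: "('a \<Rightarrow> nat \<Rightarrow> 'a) \<Rightarrow> nat \<Rightarrow> nat \<Rightarrow> 'a \<Rightarrow> nat \<Rightarrow> 'a" where
  "subst_iter th l 0 a j = a"
| "subst_iter th l (Suc k) a j = th (subst_iter th l k a (j div l)) (j mod l)"

definition primitive :: "('a \<Rightarrow> nat \<Rightarrow> 'a) \<Rightarrow> nat \<Rightarrow> 'a set \<Rightarrow> bool" where
  "primitive th l A \<longleftrightarrow>
     (\<exists>k. \<forall>a\<in>A. \<forall>b\<in>A. \<exists>j < l ^ k. subst_iter th l k a j = b)"

definition subshift :: "('a \<Rightarrow> nat \<Rightarrow> 'a) \<Rightarrow> nat \<Rightarrow> 'a set \<Rightarrow> (int \<Rightarrow> 'a) set" where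
  "subshift th l A = {x. \<forall>m n. m \<le> n \<longrightarrow>
      (\<exists>a\<in>A. \<exists>k i. i + nat (n - m) < l ^ k \<and>
          (\<forall>t. m \<le> t \<and> t \<le> n \<longrightarrow> x t = subst_iter th l k a (i + nat (t - m))))}"

definition standing :: "('a \<Rightarrow> nat \<Rightarrow> 'a) \<Rightarrow> nat \<Rightarrow> 'a set \<Rightarrow> 'a \<Rightarrow> bool" where
  "standing th l A a0 \<longleftrightarrow>
     finite A \<and> (\<forall>a\<in>A. \<forall>j<l. th a j \<in> A) \<and>
     a0 \<in> A \<and> th a0 0 = a0 \<and>
     (\<forall>a\<in>A. \<forall>b\<in>A. (\<forall>j<l. th a j = th b j) \<longrightarrow> a = b) \<and>
     infinite (subshift th l A)"

definition fixpt :: "('a \<Rightarrow> nat \<Rightarrow> 'a) \<Rightarrow> nat \<Rightarrow> 'a \<Rightarrow> nat \<Rightarrow> 'a" where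
  "fixpt th l a0 r = subst_iter th l (Suc r) a0 r"

definition height :: "('a \<Rightarrow> nat \<Rightarrow> 'a) \<Rightarrow> nat \<Rightarrow> 'a \<Rightarrow> nat" where
  "height th l a0 = (GREATEST m. m \<ge> 1 \<and> gcd m l = 1 \<and>
       m dvd Gcd {r. r \<ge> 1 \<and> fixpt th l a0 r = fixpt th l a0 0})"

definition column :: "('a \<Rightarrow> nat \<Rightarrow> 'a) \<Rightarrow> nat \<Rightarrow> 'a set \<Rightarrow> nat" where
  "column th l A = (LEAST n. \<exists>k\<ge>1. \<exists>j < l ^ k.
       n = card ((\<lambda>a. subst_iter th l k a j) ` A))"

definition join_subst :: "('a \<Rightarrow> nat \<Rightarrow> 'a) \<Rightarrow> ('b \<Rightarrow> nat \<Rightarrow> 'b) \<Rightarrow> ('a \<times> 'b) \<Rightarrow> nat \<Rightarrow> ('a \<times> 'b)" where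
  "join_subst th ze p j = (th (fst p) j, ze (snd p) j)"

definition is_subst_joining ::
  "('a \<Rightarrow> nat \<Rightarrow> 'a) \<Rightarrow> ('b \<Rightarrow> nat \<Rightarrow> 'b) \<Rightarrow> nat \<Rightarrow> 'a set \<Rightarrow> 'b set \<Rightarrow> ('a \<times> 'b) set \<Rightarrow> bool" where
  "is_subst_joining th ze l A B J \<longleftrightarrow>
     J \<subseteq> A \<times> B \<and> fst ` J = A \<and> snd ` J = B \<and>
     (\<forall>a b. (a, b) \<in> J \<longrightarrow> (\<forall>j<l. (th a j, ze b j) \<in> J))"

end

theory Submission
  imports Defs "HOL-Number_Theory.Cong"
begin

text \<open>
  Both coordinates of the joining evolve independently: the iterates of \<open>\<Sigma>\<close> are the pairs of
  the iterates of \<open>\<theta>\<close> and \<open>\<zeta>\<close>. Hence a return of the fixed point of \<open>\<Sigma>\<close> to \<open>e = (e\<^sub>1, e\<^sub>2)\<close>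
  at time \<open>r\<close> is a return of the \<open>\<theta>\<close>-fixed point from \<open>e\<^sub>1\<close> and of the \<open>\<zeta>\<close>-fixed point from
  \<open>e\<^sub>2\<close>. By primitivity \<open>e\<^sub>1\<close> occurs in \<open>u\<close> at some position \<open>p\<close>, so \<open>u\<close> takes the value \<open>e\<^sub>1\<close>
  at both \<open>p \<lambda>\<^sup>r\<^sup>+\<^sup>1\<close> and \<open>p \<lambda>\<^sup>r\<^sup>+\<^sup>1 + r\<close>; and positions carrying the same letter are congruent
  modulo every divisor of the return-time gcd that is coprime to \<open>\<lambda>\<close> (pad both with a word of
  \<open>\<theta>\<^sup>K\<close> leading back to \<open>a\<^sub>0\<close>, then cancel \<open>\<lambda>\<^sup>K\<close>). So \<open>h(\<theta>)\<close> and \<open>h(\<zeta>)\<close> divide every return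
  time of \<open>\<Sigma>\<close>, and their lcm, being coprime to \<open>\<lambda>\<close>, divides \<open>h(\<Sigma>)\<close>.

  For the column numbers, the coordinate projections carry every column of \<open>\<Sigma>\<close> onto columns of
  \<open>\<theta>\<close> and \<open>\<zeta>\<close>, and conversely the concatenation of minimal columns of \<open>\<theta>\<close> and \<open>\<zeta>\<close> is a
  column of \<open>\<Sigma>\<close> contained in a product of sets of sizes \<open>c(\<theta>)\<close> and \<open>c(\<zeta>)\<close>.
\<close>

section \<open>Iterates of a substitution\<close>

lemma subst_iter_add:
  assumes "0 < l"
  shows "subst_iter th l (k + m) a j
       = subst_iter th l m (subst_iter th l k a (j div l ^ m)) (j mod l ^ m)"
proof (induction m arbitrary: j)
  case 0
  then show ?case by simp
next
  case (Suc m)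
  have "j div l div l ^ m = j div l ^ Suc m" by (simp add: div_mult2_eq)
  moreover have "j mod l ^ Suc m div l = j div l mod l ^ m" by (simp add: mod_mult2_eq assms)
  moreover have "j mod l ^ Suc m mod l = j mod l" by (simp add: mod_mod_cancel)
  ultimately show ?case using Suc by simp
qed

lemma subst_iter_concat:
  assumes "0 < l" "j2 < l ^ k2"
  shows "subst_iter th l (k1 + k2) a (j1 * l ^ k2 + j2)
       = subst_iter th l k2 (subst_iter th l k1 a j1) j2"
  using subst_iter_add[OF assms(1), of th k1 k2 a "j1 * l ^ k2 + j2"] assms by simp

lemma subst_iter_closed:
  assumes "\<And>a j. a \<in> A \<Longrightarrow> j < l \<Longrightarrow> th a j \<in> A" "a \<in> A" "j < l ^ k"
  shows "subst_iter th l k a j \<in> A"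
  using assms(3)
proof (induction k arbitrary: j)
  case 0
  then show ?case using assms(2) by simp
next
  case (Suc k)
  then have "j div l < l ^ k" by (simp add: less_mult_imp_div_less mult.commute)
  moreover have "0 < l" using Suc.prems by (cases "l = 0") auto
  ultimately show ?case using Suc assms(1) by simp
qed

lemma subst_iter_fixed_letter: "th a0 0 = a0 \<Longrightarrow> subst_iter th l k a0 0 = a0"
  by (induction k) auto

lemma subst_iter_map:
  assumes "\<And>p j. \<pi> (S p j) = th (\<pi> p) j"
  shows "\<pi> (subst_iter S l k p j) = subst_iter th l k (\<pi> p) j"
  by (induction k arbitrary: j) (simp_all add: assms)

lemma subst_iter_join_subst:
  "subst_iter (join_subst th ze) l k p j = (subst_iter th l k (fst p) j, subst_iter ze l k (snd p) j)"
  by (induction k arbitrary: j) (auto simp: join_subst_def)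

section \<open>The fixed point\<close>

lemma less_power_Suc:
  assumes "2 \<le> (l::nat)"
  shows "j < l ^ Suc j"
proof -
  have "j < 2 ^ j" by (rule less_exp)
  also have "(2::nat) ^ j \<le> l ^ j" using assms by (simp add: power_mono)
  also have "\<dots> \<le> l ^ Suc j" using assms by simp
  finally show ?thesis .
qed

lemma fixpt_eq_subst_iter:
  assumes "2 \<le> l" "th a0 0 = a0" "j < l ^ k"
  shows "fixpt th l a0 j = subst_iter th l k a0 j"
proof -
  have stable: "subst_iter th l (m + k) a0 j = subst_iter th l k a0 j" if "j < l ^ k" for m k
    using subst_iter_add[of l th m k a0 j] subst_iter_fixed_letter[of th a0 l m] that assms(1,2)
    by simp
  let ?K = "max k (Suc j)"
  have "subst_iter th l ?K a0 j = subst_iter th l k a0 j"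
    using stable[of k "?K - k"] assms(3) by simp
  moreover have "subst_iter th l ?K a0 j = subst_iter th l (Suc j) a0 j"
    using stable[of "Suc j" "?K - Suc j"] less_power_Suc[OF assms(1)] by simp
  ultimately show ?thesis by (simp add: fixpt_def)
qed

lemma fixpt_block:
  assumes "2 \<le> l" "th a0 0 = a0" "i < l ^ K"
  shows "fixpt th l a0 (n * l ^ K + i) = subst_iter th l K (fixpt th l a0 n) i"
proof -
  have "n * l ^ K + i < (n + 1) * l ^ K" using assms(3) by simp
  also have "\<dots> \<le> l ^ Suc n * l ^ K"
    using less_power_Suc[OF assms(1), of n] by (intro mult_right_mono) auto
  finally have "n * l ^ K + i < l ^ (Suc n + K)" by (simp add: power_add)
  then have "fixpt th l a0 (n * l ^ K + i) = subst_iter th l (Suc n + K) a0 (n * l ^ K + i)"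
    by (rule fixpt_eq_subst_iter[of l th a0, OF assms(1,2)])
  also have "\<dots> = subst_iter th l K (fixpt th l a0 n) i"
    unfolding fixpt_def[of th l a0 n] using assms(1,3) by (intro subst_iter_concat) simp_all
  finally show ?thesis .
qed

section \<open>Height\<close>

lemma coprime_lcm_left:
  fixes a b c :: "'a :: semiring_gcd"
  assumes "coprime a c" "coprime b c"
  shows "coprime (lcm a b) c"
  using coprime_divisors[of "lcm a b" "a * b" c c] assms by (simp add: lcm_least)

lemma Greatest_coprime_divisor:
  fixes G l :: nat
  assumes "G \<noteq> 0"
  defines "h \<equiv> GREATEST m. m \<ge> 1 \<and> gcd m l = 1 \<and> m dvd G"
  shows "coprime h l" "h dvd G" "coprime m l \<Longrightarrow> m dvd G \<Longrightarrow> m dvd h"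
proof -
  let ?Q = "\<lambda>m. m \<ge> 1 \<and> gcd m l = 1 \<and> m dvd G"
  have bound: "y \<le> G" if "?Q y" for y
    using that assms(1) by (simp add: dvd_imp_le)
  have Qh: "?Q h"
    unfolding h_def by (rule GreatestI_nat[of ?Q 1 G]) (simp_all add: bound)
  then show "coprime h l" "h dvd G" by (simp_all add: coprime_iff_gcd_eq_1)
  assume m: "coprime m l" "m dvd G"
  have "m \<noteq> 0" using m(2) assms(1) by auto
  moreover have "h \<noteq> 0" using Qh by auto
  ultimately have "lcm m h \<ge> 1" by (simp add: Suc_le_eq lcm_pos_nat)
  moreover have "coprime (lcm m h) l"
    using m(1) \<open>coprime h l\<close> by (rule coprime_lcm_left)
  ultimately have "?Q (lcm m h)"
    using m Qh by (simp add: coprime_iff_gcd_eq_1 lcm_least)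
  then have "lcm m h \<le> h"
    unfolding h_def by (rule Greatest_le_nat[of ?Q _ G]) (simp add: bound)
  moreover have "h \<le> lcm m h"
    using \<open>lcm m h \<ge> 1\<close> by (intro dvd_imp_le) simp_all
  ultimately have "lcm m h = h" by simp
  then show "m dvd h" by (metis dvd_lcm1)
qed

definition return_gcd :: "('a \<Rightarrow> nat \<Rightarrow> 'a) \<Rightarrow> nat \<Rightarrow> 'a \<Rightarrow> nat" where
  "return_gcd th l a0 = Gcd {r. r \<ge> 1 \<and> fixpt th l a0 r = fixpt th l a0 0}"

lemma height_eq_Greatest_return_gcd:
  "height th l a0 = (GREATEST m. m \<ge> 1 \<and> gcd m l = 1 \<and> m dvd return_gcd th l a0)"
  by (simp add: height_def return_gcd_def)

locale primitive_substitution =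
  fixes th :: "'a \<Rightarrow> nat \<Rightarrow> 'a" and l :: nat and A :: "'a set" and a0 :: 'a
  assumes length_ge_2: "2 \<le> l"
    and closed: "\<And>a j. a \<in> A \<Longrightarrow> j < l \<Longrightarrow> th a j \<in> A"
    and a0_in: "a0 \<in> A"
    and a0_fixed: "th a0 0 = a0"
    and is_primitive: "primitive th l A"
begin

lemma fixpt_in: "fixpt th l a0 n \<in> A"
  unfolding fixpt_def
  using subst_iter_closed[OF closed a0_in less_power_Suc[OF length_ge_2]] .

lemma fixpt_0: "fixpt th l a0 0 = a0"
  by (simp add: fixpt_def a0_fixed)

lemma reaches_letter:
  assumes "b \<in> A"
  obtains K where "\<forall>c \<in> A. \<exists>i < l ^ K. subst_iter th l K c i = b"
  using is_primitive assms unfolding primitive_def by blast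

lemma fixpt_surj:
  assumes "b \<in> A"
  obtains n where "fixpt th l a0 n = b"
proof -
  obtain K where "\<forall>c \<in> A. \<exists>i < l ^ K. subst_iter th l K c i = b"
    using reaches_letter[OF assms] .
  then obtain i where "i < l ^ K" "subst_iter th l K a0 i = b" using a0_in by blast
  then show thesis
    using that fixpt_eq_subst_iter[of l th a0, OF length_ge_2 a0_fixed] by metis
qed

lemma return_gcd_dvd:
  assumes "fixpt th l a0 r = a0"
  shows "return_gcd th l a0 dvd r"
  using assms fixpt_0 by (cases "r = 0") (auto simp: return_gcd_def intro: Gcd_dvd)

lemma fixpt_eq_imp_cong:
  assumes "coprime d l" "d dvd return_gcd th l a0" "fixpt th l a0 n = fixpt th l a0 m"
  shows "[n = m] (mod d)"
proof -
  obtain K where "\<forall>c \<in> A. \<exists>i < l ^ K. subst_iter th l K c i = a0"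
    using reaches_letter[OF a0_in] .
  then obtain i where i: "i < l ^ K" "subst_iter th l K (fixpt th l a0 n) i = a0"
    using fixpt_in by blast
  have "[k * l ^ K + i = 0] (mod d)" if "fixpt th l a0 k = fixpt th l a0 n" for k
  proof -
    have "fixpt th l a0 (k * l ^ K + i) = a0"
      using fixpt_block[of l th a0, OF length_ge_2 a0_fixed i(1)] i(2) that by simp
    then show ?thesis
      using return_gcd_dvd assms(2) by (simp add: cong_0_iff dvd_trans)
  qed
  from this[of n] this[of m] assms(3)
  have "[n * l ^ K = m * l ^ K] (mod d)"
    by (metis cong_add_rcancel_nat cong_sym cong_trans)
  moreover have "coprime (l ^ K) d" using assms(1) by (simp add: coprime_commute)
  ultimately show ?thesis using cong_mult_rcancel_nat by blast
qed

lemma return_gcd_nonzero: "return_gcd th l a0 \<noteq> 0"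
proof -
  obtain K where "\<forall>c \<in> A. \<exists>i < l ^ K. subst_iter th l K c i = a0"
    using reaches_letter[OF a0_in] .
  then obtain i where i: "i < l ^ K" "subst_iter th l K (fixpt th l a0 1) i = a0"
    using fixpt_in by blast
  then have "fixpt th l a0 (1 * l ^ K + i) = a0"
    using fixpt_block[of l th a0, OF length_ge_2 a0_fixed i(1), where n = 1] by simp
  then have "return_gcd th l a0 dvd l ^ K + i" using return_gcd_dvd by simp
  moreover have "l ^ K + i \<noteq> 0" using length_ge_2 by simp
  ultimately show ?thesis by (metis dvd_0_left_iff)
qed

lemma height_coprime: "coprime (height th l a0) l"
  and height_dvd_return_gcd: "height th l a0 dvd return_gcd th l a0"
  and dvd_height: "coprime m l \<Longrightarrow> m dvd return_gcd th l a0 \<Longrightarrow> m dvd height th l a0"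
  using Greatest_coprime_divisor[OF return_gcd_nonzero]
  by (simp_all add: height_eq_Greatest_return_gcd)

lemma height_dvd_return_time:
  assumes e1: "e1 \<in> A" "th e1 0 = e1" and return: "fixpt th l e1 r = e1"
  shows "height th l a0 dvd r"
proof -
  obtain p where p: "fixpt th l a0 p = e1" using fixpt_surj[OF e1(1)] .
  have "fixpt th l a0 (p * l ^ Suc r + r) = subst_iter th l (Suc r) e1 r"
    using fixpt_block[of l th a0, OF length_ge_2 a0_fixed less_power_Suc[OF length_ge_2]] p
    by simp
  also have "\<dots> = e1" using return by (simp only: fixpt_def)
  finally have "fixpt th l a0 (p * l ^ Suc r + r) = e1" .
  moreover have "fixpt th l a0 (p * l ^ Suc r + 0) = e1"
    using fixpt_block[of l th a0, OF length_ge_2 a0_fixed, of 0 "Suc r" p] length_ge_2 p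
      subst_iter_fixed_letter[of th e1, OF e1(2)] e1(2) by simp
  ultimately have "[p * l ^ Suc r + r = p * l ^ Suc r + 0] (mod height th l a0)"
    by (intro fixpt_eq_imp_cong height_coprime height_dvd_return_gcd) simp
  then show ?thesis by (simp only: cong_add_lcancel_nat cong_0_iff)
qed

end

lemma return_time_join_subst:
  "fixpt (join_subst th ze) l (e1, e2) r = (fixpt th l e1 r, fixpt ze l e2 r)"
  unfolding fixpt_def subst_iter_join_subst by simp

lemma lcm_height_dvd_height_join_subst:
  assumes "primitive_substitution th l A a0" "primitive_substitution ze l B b0"
    and "primitive_substitution (join_subst th ze) l J (e1, e2)" "J \<subseteq> A \<times> B"
  shows "lcm (height th l a0) (height ze l b0) dvd height (join_subst th ze) l (e1, e2)"
proof -
  interpret \<theta>: primitive_substitution th l A a0 by (rule assms(1))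
  interpret \<zeta>: primitive_substitution ze l B b0 by (rule assms(2))
  interpret \<Sigma>: primitive_substitution "join_subst th ze" l J "(e1, e2)" by (rule assms(3))
  have e1: "e1 \<in> A" "th e1 0 = e1" and e2: "e2 \<in> B" "ze e2 0 = e2"
    using \<Sigma>.a0_in \<Sigma>.a0_fixed assms(4) by (auto simp: join_subst_def)
  have "lcm (height th l a0) (height ze l b0) dvd return_gcd (join_subst th ze) l (e1, e2)"
    unfolding return_gcd_def \<Sigma>.fixpt_0
    by (intro Gcd_greatest lcm_least \<theta>.height_dvd_return_time[OF e1]
        \<zeta>.height_dvd_return_time[OF e2]) (auto simp: return_time_join_subst)
  then show ?thesis
    by (intro \<Sigma>.dvd_height coprime_lcm_left \<theta>.height_coprime \<zeta>.height_coprime)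
qed

section \<open>Column number\<close>

lemma column_attained:
  assumes "0 < l"
  obtains k j where "k \<ge> 1" "j < l ^ k" "column th l A = card ((\<lambda>a. subst_iter th l k a j) ` A)"
proof -
  let ?P = "\<lambda>n. \<exists>k\<ge>1. \<exists>j<l ^ k. n = card ((\<lambda>a. subst_iter th l k a j) ` A)"
  have "?P (card ((\<lambda>a. subst_iter th l 1 a 0) ` A))"
    using assms by (metis le_refl power_one_right)
  then have "?P (column th l A)" unfolding column_def by (rule LeastI)
  then show thesis using that by blast
qed

lemma column_le_card:
  assumes "k \<ge> 1" "j < l ^ k"
  shows "column th l A \<le> card ((\<lambda>a. subst_iter th l k a j) ` A)"
  unfolding column_def by (rule Least_le) (use assms in blast)

lemma column_le_column_of_factor:
  assumes "0 < l" "finite J" "\<pi> ` J = A" "\<And>p j. \<pi> (S p j) = th (\<pi> p) j"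
  shows "column th l A \<le> column S l J"
proof -
  obtain k j where kj: "k \<ge> 1" "j < l ^ k"
    and col: "column S l J = card ((\<lambda>p. subst_iter S l k p j) ` J)"
    using column_attained[OF assms(1)] .
  have "(\<lambda>a. subst_iter th l k a j) ` A = \<pi> ` (\<lambda>p. subst_iter S l k p j) ` J"
    unfolding assms(3)[symmetric] image_image subst_iter_map[of \<pi> S th, OF assms(4)] ..
  then have "column th l A \<le> card (\<pi> ` (\<lambda>p. subst_iter S l k p j) ` J)"
    using column_le_card[OF kj] by metis
  also have "\<dots> \<le> column S l J"
    unfolding col using assms(2) by (intro card_image_le) simp
  finally show ?thesis .
qed

lemma column_join_subst_le_mult:
  assumes "0 < l" "finite A" "finite B" "J \<subseteq> A \<times> B"
    and closed: "\<And>b j. b \<in> B \<Longrightarrow> j < l \<Longrightarrow> ze b j \<in> B"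
  shows "column (join_subst th ze) l J \<le> column th l A * column ze l B"
proof -
  obtain k1 j1 where k1: "k1 \<ge> 1" "j1 < l ^ k1"
    and col1: "column th l A = card ((\<lambda>a. subst_iter th l k1 a j1) ` A)"
    using column_attained[OF assms(1)] .
  obtain k2 j2 where k2: "k2 \<ge> 1" "j2 < l ^ k2"
    and col2: "column ze l B = card ((\<lambda>b. subst_iter ze l k2 b j2) ` B)"
    using column_attained[OF assms(1)] .
  define j where "j = j1 * l ^ k2 + j2"
  have "j < (j1 + 1) * l ^ k2" using k2(2) by (simp add: j_def)
  also have "\<dots> \<le> l ^ k1 * l ^ k2"
    using k1(2) by (intro mult_right_mono) simp_all
  finally have j: "j < l ^ (k1 + k2)" by (simp add: power_add)
  let ?IA = "(\<lambda>a. subst_iter th l (k1 + k2) a j) ` A"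
  let ?IB = "(\<lambda>b. subst_iter ze l (k1 + k2) b j) ` B"
  have "?IA = (\<lambda>a. subst_iter th l k2 a j2) ` (\<lambda>a. subst_iter th l k1 a j1) ` A"
    by (simp add: image_image j_def subst_iter_concat[OF assms(1) k2(2)])
  then have IA: "card ?IA \<le> column th l A"
    unfolding col1 using assms(2) by (simp add: card_image_le)
  have "?IB \<subseteq> (\<lambda>b. subst_iter ze l k2 b j2) ` B"
    using subst_iter_closed[of B l ze, OF closed _ k1(2)]
    by (auto simp: j_def subst_iter_concat[OF assms(1) k2(2)])
  then have IB: "card ?IB \<le> column ze l B"
    unfolding col2 using assms(3) by (simp add: card_mono)
  have "(\<lambda>p. subst_iter (join_subst th ze) l (k1 + k2) p j) ` J \<subseteq> ?IA \<times> ?IB"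
    using assms(4) by (auto simp: subst_iter_join_subst)
  then have card: "card ((\<lambda>p. subst_iter (join_subst th ze) l (k1 + k2) p j) ` J) \<le> card ?IA * card ?IB"
    using assms(2,3) by (metis card_cartesian_product card_mono finite_SigmaI finite_imageI)
  have "column (join_subst th ze) l J
      \<le> card ((\<lambda>p. subst_iter (join_subst th ze) l (k1 + k2) p j) ` J)"
    using k1(1) j by (intro column_le_card) simp_all
  also have "\<dots> \<le> card ?IA * card ?IB" by (rule card)
  also have "\<dots> \<le> column th l A * column ze l B" using IA IB by (rule mult_le_mono)
  finally show ?thesis .
qed

theorem mainTheorem15:
  fixes th :: "'a \<Rightarrow> nat \<Rightarrow> 'a" and ze :: "'b \<Rightarrow> nat \<Rightarrow> 'b"
    and l :: nat and A :: "'a set" and B :: "'b set" and J :: "('a \<times> 'b) set"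
    and a0 :: 'a and b0 :: 'b and e :: "'a \<times> 'b"
  assumes "l \<ge> 2"
    and "standing th l A a0" and "primitive th l A"
    and "standing ze l B b0" and "primitive ze l B"
    and "is_subst_joining th ze l A B J"
    and "primitive (join_subst th ze) l J"
    and "e \<in> J" and "join_subst th ze e 0 = e"
  shows "lcm (height th l a0) (height ze l b0) dvd height (join_subst th ze) l e
       \<and> max (column th l A) (column ze l B) \<le> column (join_subst th ze) l J
       \<and> column (join_subst th ze) l J \<le> column th l A * column ze l B"
proof -
  have joining: "J \<subseteq> A \<times> B" "fst ` J = A" "snd ` J = B"
    "\<And>a b j. (a, b) \<in> J \<Longrightarrow> j < l \<Longrightarrow> (th a j, ze b j) \<in> J"
    using assms(6) unfolding is_subst_joining_def by auto
  have \<theta>: "primitive_substitution th l A a0"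
    using assms(1-3) by unfold_locales (auto simp: standing_def)
  have \<zeta>: "primitive_substitution ze l B b0"
    using assms(1,4,5) by unfold_locales (auto simp: standing_def)
  have \<Sigma>: "primitive_substitution (join_subst th ze) l J e"
    using assms(1,7-9) joining(4) by unfold_locales (auto simp: join_subst_def)
  have l: "0 < l" using assms(1) by simp
  have finite: "finite A" "finite B" "finite J"
    using assms(2,4) joining(1) by (auto simp: standing_def intro: finite_subset)
  have "lcm (height th l a0) (height ze l b0) dvd height (join_subst th ze) l e"
    using lcm_height_dvd_height_join_subst[OF \<theta> \<zeta>] \<Sigma> joining(1) by (cases e) blast
  moreover have "column th l A \<le> column (join_subst th ze) l J"
    using l finite(3) joining(2) by (rule column_le_column_of_factor) (simp add: join_subst_def)
  moreover have "column ze l B \<le> column (join_subst th ze) l J"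
    using l finite(3) joining(3) by (rule column_le_column_of_factor) (simp add: join_subst_def)
  moreover have "column (join_subst th ze) l J \<le> column th l A * column ze l B"
    using l finite(1,2) joining(1) primitive_substitution.closed[OF \<zeta>]
    by (rule column_join_subst_le_mult)
  ultimately show ?thesis by simp
qed

end
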